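(* Let $I$ be an open interval and let $a_1,a_2,a_3\in I$ satisfy $\sin\big(\frac{a_1-a_3}{2}\big)\sin\big(\frac{a_2-a_1}{2}\big)\sin\big(\frac{a_3-a_2}{2}\big)\neq0$. Then for all $f\in\mathscr{C}^3(I)$ and $x\in I$, \[ \begin{aligned} f(x)&=\bigg(f(a_1)+\int_{a_1}^x(f'''+f')(t)\big(1-\cos(a_1-t)\big)dt\bigg)\frac{\cos\big(x-\frac{a_2+a_3}{2}\big)-\cos\big(\frac{a_2-a_3}{2}\big)}{\cos\big(a_1-\frac{a_2+a_3}{2}\big)-\cos\big(\frac{a_2-a_3}{2}\big)}\\ &\quad+\bigg(f(a_2)+\int_{a_2}^x(f'''+f')(t)\big(1-\cos(a_2-t)\big)dt\bigg)\frac{\cos\big(x-\frac{a_1+a_3}{2}\big)-\cos\big(\frac{a_1-a_3}{2}\big)}{\cos\big(a_2-\frac{a_1+a_3}{2}\big)-\cos\big(\frac{a_1-a_3}{2}\big)}\\ &\quad+\bigg(f(a_3)+\int_{a_3}^x(f'''+f')(t)\big(1-\cos(a_3-t)\big)dt\bigg)\frac{\cos\big(x-\frac{a_1+a_2}{2}\big)-\cos\big(\frac{a_1-a_2}{2}\big)}{\cos\big(a_3-\frac{a_1+a_2}{2}\big)-\cos\big(\frac{a_1-a_2}{2}\big)}. \end{aligned} \]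
   Context: $\mathscr{C}^3(I)$ denotes the space of three times continuously differentiable complex-valued functions on $I$. *)

theory Defs
  imports "HOL-Analysis.Analysis"
begin

definition oint :: "real \<Rightarrow> real \<Rightarrow> (real \<Rightarrow> complex) \<Rightarrow> complex" where
  "oint a b g = (if a \<le> b then integral {a..b} g else - integral {b..a} g)"

definition C3_with :: "real set \<Rightarrow> (real \<Rightarrow> complex) \<Rightarrow> (real \<Rightarrow> complex) \<Rightarrow> (real \<Rightarrow> complex) \<Rightarrow> (real \<Rightarrow> complex) \<Rightarrow> bool" where
  "C3_with I f f1 f2 f3 \<longleftrightarrow>
     (\<forall>t\<in>I. (f has_vector_derivative f1 t) (at t) \<and> (f1 has_vector_derivative f2 t) (at t)
            \<and> (f2 has_vector_derivative f3 t) (at t)) \<and> continuous_on I f3"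

end

theory Submission
  imports Defs
begin

text \<open>
  The function G(t) = f(t) + f''(t) (1 - cos (a - t)) + f'(t) sin (a - t) satisfies G(a) = f(a)
  and G' = (f''' + f') (1 - cos (a - t)), so the bracket belonging to the node a equals G(x).
  As a function of a, G(x) lies in the span of 1, cos a, sin a and takes the value f(x) at a = x,
  so it suffices that the three-point formula is exact on that span. In half angles 1, cos t and
  sin t are binary quadratic forms in (cos (t/2), sin (t/2)), and a binary quadratic form is
  recovered from its values at three pairwise non-proportional points by Lagrange interpolation;
  the hypothesis on the sines is exactly this non-proportionality.
\<close>

lemma binary_quadratic_form_interpolation:
  fixes u v u1 v1 u2 v2 u3 v3 \<alpha> \<beta> \<gamma> :: real
  defines "q \<equiv> \<lambda>u v. \<alpha> * u\<^sup>2 + \<beta> * (u * v) + \<gamma> * v\<^sup>2"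
    and "d \<equiv> \<lambda>u v u' v'. u * v' - v * u'"
  assumes "d u1 v1 u2 v2 \<noteq> 0" "d u1 v1 u3 v3 \<noteq> 0" "d u2 v2 u3 v3 \<noteq> 0"
  shows "q u v = q u1 v1 * (d u v u2 v2 * d u v u3 v3 / (d u1 v1 u2 v2 * d u1 v1 u3 v3))
               + q u2 v2 * (d u v u1 v1 * d u v u3 v3 / (d u2 v2 u1 v1 * d u2 v2 u3 v3))
               + q u3 v3 * (d u v u1 v1 * d u v u2 v2 / (d u3 v3 u1 v1 * d u3 v3 u2 v2))"
proof -
  have swap: "d u2 v2 u1 v1 = - d u1 v1 u2 v2" "d u3 v3 u1 v1 = - d u1 v1 u3 v3"
    "d u3 v3 u2 v2 = - d u2 v2 u3 v3"
    unfolding d_def by simp_all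
  have "q u v * (d u1 v1 u2 v2 * d u1 v1 u3 v3 * d u2 v2 u3 v3)
      = q u1 v1 * d u v u2 v2 * d u v u3 v3 * d u2 v2 u3 v3
      - q u2 v2 * d u v u1 v1 * d u v u3 v3 * d u1 v1 u3 v3
      + q u3 v3 * d u v u1 v1 * d u v u2 v2 * d u1 v1 u2 v2"
    unfolding q_def d_def by algebra
  with assms(3-5) show ?thesis
    unfolding swap by (simp add: field_simps)
qed

definition trig_lagrange :: "real \<Rightarrow> real \<Rightarrow> real \<Rightarrow> real \<Rightarrow> real" where
  "trig_lagrange a b c x =
     (cos (x - (b + c) / 2) - cos ((b - c) / 2)) / (cos (a - (b + c) / 2) - cos ((b - c) / 2))"

lemma cos_diff_cos_half_angles:
  fixes y b c :: real
  shows "cos (y - (b + c) / 2) - cos ((b - c) / 2) = - 2 * sin ((b - y) / 2) * sin ((c - y) / 2)"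
proof -
  have "(y - (b + c) / 2 + (b - c) / 2) / 2 = - ((c - y) / 2)"
    and "((b - c) / 2 - (y - (b + c) / 2)) / 2 = (b - y) / 2"
    by (simp_all add: field_simps)
  then show ?thesis
    unfolding cos_diff_cos by (simp only: sin_minus) simp
qed

lemma trig_lagrange_half_angles:
  "trig_lagrange a b c x =
     sin ((b - x) / 2) * sin ((c - x) / 2) / (sin ((b - a) / 2) * sin ((c - a) / 2))"
  unfolding trig_lagrange_def cos_diff_cos_half_angles by simp

lemma sin_half_diff_as_cross:
  fixes a b :: real
  shows "sin ((b - a) / 2) = cos (a / 2) * sin (b / 2) - sin (a / 2) * cos (b / 2)"
  using sin_diff[of "b / 2" "a / 2"] by (simp add: diff_divide_distrib algebra_simps)

lemma trig_lagrange_interpolation: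
  fixes c0 c1 c2 :: "'a::real_vector"
  assumes "sin ((a2 - a1) / 2) \<noteq> 0" "sin ((a3 - a1) / 2) \<noteq> 0" "sin ((a3 - a2) / 2) \<noteq> 0"
  defines "g \<equiv> \<lambda>t. c0 + cos t *\<^sub>R c1 + sin t *\<^sub>R c2"
  shows "g x = trig_lagrange a1 a2 a3 x *\<^sub>R g a1 + trig_lagrange a2 a1 a3 x *\<^sub>R g a2
             + trig_lagrange a3 a1 a2 x *\<^sub>R g a3"
proof -
  define L1 L2 L3 where "L1 = trig_lagrange a1 a2 a3 x" "L2 = trig_lagrange a2 a1 a3 x"
    "L3 = trig_lagrange a3 a1 a2 x"
  define Q where "Q \<alpha> \<beta> \<gamma> t =
      \<alpha> * (cos (t / 2))\<^sup>2 + \<beta> * (cos (t / 2) * sin (t / 2)) + \<gamma> * (sin (t / 2))\<^sup>2"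
    for \<alpha> \<beta> \<gamma> t :: real
  have exact: "Q \<alpha> \<beta> \<gamma> x = Q \<alpha> \<beta> \<gamma> a1 * L1 + Q \<alpha> \<beta> \<gamma> a2 * L2 + Q \<alpha> \<beta> \<gamma> a3 * L3"
    for \<alpha> \<beta> \<gamma>
    using binary_quadratic_form_interpolation[where
        ?u1.0 = "cos (a1 / 2)" and ?v1.0 = "sin (a1 / 2)" and ?u2.0 = "cos (a2 / 2)"
        and ?v2.0 = "sin (a2 / 2)" and ?u3.0 = "cos (a3 / 2)" and ?v3.0 = "sin (a3 / 2)"
        and u = "cos (x / 2)" and v = "sin (x / 2)" and \<alpha> = \<alpha> and \<beta> = \<beta> and \<gamma> = \<gamma>,
        unfolded sin_half_diff_as_cross[symmetric]] assms(1-3)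
    unfolding Q_def L1_L2_L3_def trig_lagrange_half_angles by simp
  have "Q 1 0 1 t = 1" "Q 1 0 (-1) t = cos t" "Q 0 2 0 t = sin t" for t
    using cos_double[of "t / 2"] sin_double[of "t / 2"] by (simp_all add: Q_def)
  then have "L1 + L2 + L3 = 1" "cos a1 * L1 + cos a2 * L2 + cos a3 * L3 = cos x"
    "sin a1 * L1 + sin a2 * L2 + sin a3 * L3 = sin x"
    using exact[of 1 0 1] exact[of 1 0 "-1"] exact[of 0 2 0] by simp_all
  moreover have "L1 *\<^sub>R g a1 + L2 *\<^sub>R g a2 + L3 *\<^sub>R g a3
      = (L1 + L2 + L3) *\<^sub>R c0 + (cos a1 * L1 + cos a2 * L2 + cos a3 * L3) *\<^sub>R c1
        + (sin a1 * L1 + sin a2 * L2 + sin a3 * L3) *\<^sub>R c2"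
    unfolding g_def by (simp add: scaleR_add_left scaleR_add_right algebra_simps)
  ultimately show ?thesis
    unfolding L1_L2_L3_def by (simp add: g_def)
qed

lemma oint_eq_diff_antiderivative:
  fixes G g :: "real \<Rightarrow> complex"
  assumes "is_interval I" "a \<in> I" "x \<in> I"
    and "\<And>t. t \<in> I \<Longrightarrow> (G has_vector_derivative g t) (at t)"
  shows "oint a x g = G x - G a"
proof -
  have ftc: "integral {u..v} g = G v - G u" if "u \<in> I" "v \<in> I" "u \<le> v" for u v
  proof (rule integral_unique, rule fundamental_theorem_of_calculus[OF \<open>u \<le> v\<close>])
    have "{u..v} \<subseteq> I"
      using assms(1) that(1,2) by (meson atLeastAtMost_iff is_interval_1 subsetI)
    then show "\<And>t. t \<in> {u..v} \<Longrightarrow> (G has_vector_derivative g t) (at t within {u..v})"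
      using assms(4) has_vector_derivative_at_within by blast
  qed
  show ?thesis
    using ftc[OF assms(2,3)] ftc[OF assms(3,2)] unfolding oint_def by simp
qed

lemma oint_trig_kernel_remainder:
  assumes "C3_with I f f1 f2 f3" "is_interval I" "a \<in> I" "x \<in> I"
  shows "f a + oint a x (\<lambda>t. (f3 t + f1 t) * complex_of_real (1 - cos (a - t)))
       = f x + f2 x * complex_of_real (1 - cos (a - x)) + f1 x * complex_of_real (sin (a - x))"
proof -
  define G where
    "G t = f t + f2 t * complex_of_real (1 - cos (a - t)) + f1 t * complex_of_real (sin (a - t))"
    for t
  have "(G has_vector_derivative (f3 t + f1 t) * complex_of_real (1 - cos (a - t))) (at t)"
    if "t \<in> I" for t
  proof -
    from assms(1) that have "(f has_vector_derivative f1 t) (at t)"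
      "(f1 has_vector_derivative f2 t) (at t)" "(f2 has_vector_derivative f3 t) (at t)"
      unfolding C3_with_def by auto
    moreover have "((\<lambda>t. 1 - cos (a - t)) has_real_derivative - sin (a - t)) (at t)"
      and "((\<lambda>t. sin (a - t)) has_real_derivative - cos (a - t)) (at t)"
      by (auto intro!: derivative_eq_intros)
    ultimately have "(G has_vector_derivative
        f1 t + (f2 t * of_real (- sin (a - t)) + f3 t * of_real (1 - cos (a - t)))
        + (f1 t * of_real (- cos (a - t)) + f2 t * of_real (sin (a - t)))) (at t)"
      unfolding G_def
      by (intro has_vector_derivative_add has_vector_derivative_mult has_vector_derivative_of_real)
    then show ?thesis
      by (simp add: algebra_simps)
  qed
  then have "oint a x (\<lambda>t. (f3 t + f1 t) * complex_of_real (1 - cos (a - t))) = G x - G a"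
    by (rule oint_eq_diff_antiderivative[OF assms(2-4)])
  then show ?thesis
    by (simp add: G_def)
qed

theorem mainTheorem12:
  fixes I :: "real set" and a1 a2 a3 x :: real and f f1 f2 f3 :: "real \<Rightarrow> complex"
  assumes "open I" and "is_interval I"
    and "a1 \<in> I" and "a2 \<in> I" and "a3 \<in> I"
    and "sin ((a1 - a3) / 2) * sin ((a2 - a1) / 2) * sin ((a3 - a2) / 2) \<noteq> 0"
    and "C3_with I f f1 f2 f3"
    and "x \<in> I"
  shows "f x =
    (f a1 + oint a1 x (\<lambda>t. (f3 t + f1 t) * complex_of_real (1 - cos (a1 - t))))
      * complex_of_real ((cos (x - (a2 + a3) / 2) - cos ((a2 - a3) / 2))
                       / (cos (a1 - (a2 + a3) / 2) - cos ((a2 - a3) / 2)))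
  + (f a2 + oint a2 x (\<lambda>t. (f3 t + f1 t) * complex_of_real (1 - cos (a2 - t))))
      * complex_of_real ((cos (x - (a1 + a3) / 2) - cos ((a1 - a3) / 2))
                       / (cos (a2 - (a1 + a3) / 2) - cos ((a1 - a3) / 2)))
  + (f a3 + oint a3 x (\<lambda>t. (f3 t + f1 t) * complex_of_real (1 - cos (a3 - t))))
      * complex_of_real ((cos (x - (a1 + a2) / 2) - cos ((a1 - a2) / 2))
                       / (cos (a3 - (a1 + a2) / 2) - cos ((a1 - a2) / 2)))"
proof -
  have nodes: "sin ((a2 - a1) / 2) \<noteq> 0" "sin ((a3 - a1) / 2) \<noteq> 0" "sin ((a3 - a2) / 2) \<noteq> 0"
    using assms(6) sin_minus[of "(a1 - a3) / 2"] by (auto simp: minus_divide_left)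
  define g where "g a = f x + f2 x * complex_of_real (1 - cos (a - x))
      + f1 x * complex_of_real (sin (a - x))" for a
  have g_trig: "g = (\<lambda>a. (f x + f2 x) + cos a *\<^sub>R (- cos x *\<^sub>R f2 x - sin x *\<^sub>R f1 x)
      + sin a *\<^sub>R (cos x *\<^sub>R f1 x - sin x *\<^sub>R f2 x))"
    by (auto simp: g_def cos_diff sin_diff scaleR_conv_of_real algebra_simps)
  have remainder: "f a + oint a x (\<lambda>t. (f3 t + f1 t) * complex_of_real (1 - cos (a - t))) = g a"
    if "a \<in> I" for a
    unfolding g_def by (rule oint_trig_kernel_remainder[OF assms(7,2) that assms(8)])
  have "g x = trig_lagrange a1 a2 a3 x *\<^sub>R g a1 + trig_lagrange a2 a1 a3 x *\<^sub>R g a2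
      + trig_lagrange a3 a1 a2 x *\<^sub>R g a3"
    unfolding g_trig by (rule trig_lagrange_interpolation[OF nodes])
  moreover have "g x = f x"
    by (simp add: g_def)
  ultimately show ?thesis
    unfolding remainder[OF assms(3)] remainder[OF assms(4)] remainder[OF assms(5)]
      trig_lagrange_def[symmetric]
    by (simp add: scaleR_conv_of_real mult.commute)
qed

end
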